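(* Suppose $\tau_L>\delta_L+1$ and $\delta_L>0$. Let $K=\left[-\frac{1}{\lambda_L^u},\hat m_{\rm max}\right]$ for some $\hat m_{\rm max}\in[0,1]$. The cone $\hat\Psi_K$ is invariant and expanding for $A_L^{-1}$ with expansion factor $\hat c_L=\min\left\{\frac{1}{\lambda_L^s},\frac{1+\lambda_L^s}{\sqrt2\,\lambda_L^s}\right\}$.
   Context: Let $A_L=\begin{bmatrix}\tau_L&1\\-\delta_L&0\end{bmatrix}$; under the hypotheses its eigenvalues are real with $0<\lambda_L^s<1<\lambda_L^u$. For an interval $K\subset\mathbb{R}$, $\hat\Psi_K=\left\{t\begin{bmatrix}\hat m\\1\end{bmatrix}: \hat m\in K,\ t\in\mathbb{R}\right\}$. For a real $2\times2$ matrix $A$, the cone $\hat\Psi_K$ is invariant for $A$ if $Av\in\hat\Psi_K$ for all $v\in\hat\Psi_K$, and expanding with expansion factor $c>1$ if $\|Av\|\ge c\|v\|$ for all $v\in\hat\Psi_K$ (Euclidean norm). *)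

theory Defs
  imports "HOL-Analysis.Analysis"
begin

definition A_L :: "real \<Rightarrow> real \<Rightarrow> real^2^2" where
  "A_L tau delta = vector [vector [tau, 1], vector [- delta, 0]]"

definition is_eigenvalue :: "real^2^2 \<Rightarrow> real \<Rightarrow> bool" where
  "is_eigenvalue A l \<longleftrightarrow> (\<exists>v. v \<noteq> 0 \<and> A *v v = l *\<^sub>R v)"

definition cone_hat :: "real set \<Rightarrow> (real^2) set" where
  "cone_hat K = {t *\<^sub>R vector [m, 1] | m t. m \<in> K}"

definition cone_invariant :: "real^2^2 \<Rightarrow> (real^2) set \<Rightarrow> bool" where
  "cone_invariant A C \<longleftrightarrow> (\<forall>v\<in>C. A *v v \<in> C)"

definition cone_expanding :: "real^2^2 \<Rightarrow> (real^2) set \<Rightarrow> real \<Rightarrow> bool" where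
  "cone_expanding A C c \<longleftrightarrow> c > 1 \<and> (\<forall>v\<in>C. norm (A *v v) \<ge> c * norm v)"

end

theory Submission
  imports Defs
begin

text \<open>By Vieta, \<open>\<tau>\<^sub>L = \<lambda>\<^sup>s + \<lambda>\<^sup>u\<close> and \<open>\<delta>\<^sub>L = \<lambda>\<^sup>s \<lambda>\<^sup>u\<close>. The inverse
  \<open>A\<^sub>L\<^sup>-\<^sup>1\<close> sends the direction \<open>(m, 1)\<close> to a multiple of \<open>(-1/(\<delta>\<^sub>L m + \<tau>\<^sub>L), 1)\<close>,
  and \<open>\<delta>\<^sub>L m + \<tau>\<^sub>L \<ge> \<lambda>\<^sup>u\<close> for \<open>m \<ge> -1/\<lambda>\<^sup>u\<close>, so the new slope lies in
  \<open>[-1/\<lambda>\<^sup>u, 0]\<close>. Expansion by \<open>c\<close> on the direction \<open>(m, 1)\<close> amounts to the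
  quadratic inequality \<open>(c \<delta>\<^sub>L)\<^sup>2 (m\<^sup>2 + 1) \<le> 1 + (\<delta>\<^sub>L m + \<tau>\<^sub>L)\<^sup>2\<close>, where
  \<open>(c \<delta>\<^sub>L)\<^sup>2 = (\<lambda>\<^sup>u)\<^sup>2 min 1 ((1 + \<lambda>\<^sup>s)\<^sup>2/2)\<close>. For \<open>m \<le> 0\<close> it follows from
  \<open>|\<lambda>\<^sup>u m| \<le> 1\<close>; for \<open>m \<in> [0, 1]\<close> the difference is a concave quadratic that is
  nonnegative at both endpoints.\<close>

lemma norm_vector_2: "norm (vector [a, b] :: real^2) = sqrt (a\<^sup>2 + b\<^sup>2)"
  by (simp add: norm_vec_def L2_set_def sum_2)

lemma matrix_inv_eqI:
  fixes A B :: "'a::comm_ring_1^'n^'n"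
  assumes "A ** B = mat 1" and "B ** A = mat 1"
  shows "matrix_inv A = B"
proof -
  let ?C = "matrix_inv A"
  have C: "A ** ?C = mat 1 \<and> ?C ** A = mat 1"
    unfolding matrix_inv_def by (rule someI[of _ B]) (use assms in auto)
  have "?C = ?C ** (A ** B)" by (simp add: assms)
  also have "\<dots> = (?C ** A) ** B" by (simp add: matrix_mul_assoc)
  also have "\<dots> = B" using C by simp
  finally show ?thesis .
qed

lemma matrix_inv_A_L:
  assumes "delta \<noteq> 0"
  shows "matrix_inv (A_L tau delta) = vector [vector [0, -1/delta], vector [1, tau/delta]]"
  by (rule matrix_inv_eqI)
    (use assms in \<open>auto simp: A_L_def matrix_matrix_mult_def vec_eq_iff forall_2 sum_2 mat_def
      field_simps\<close>)

lemma matrix_inv_A_L_mult_slope_vector: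
  assumes "delta \<noteq> 0"
  shows "matrix_inv (A_L tau delta) *v vector [m, 1] = vector [-1/delta, m + tau/delta]"
  using assms
  by (auto simp: matrix_inv_A_L matrix_vector_mult_def vec_eq_iff forall_2 sum_2)

lemma matrix_inv_A_L_slope_map:
  assumes "delta \<noteq> 0" and "delta * m + tau \<noteq> 0"
  shows "matrix_inv (A_L tau delta) *v vector [m, 1]
       = ((delta * m + tau) / delta) *\<^sub>R vector [-1 / (delta * m + tau), 1]"
  using assms by (simp add: matrix_inv_A_L_mult_slope_vector vec_eq_iff forall_2) (simp add: field_simps)

lemma norm_matrix_inv_A_L_mult_slope_vector:
  assumes "delta > 0"
  shows "norm (matrix_inv (A_L tau delta) *v vector [m, 1]) = sqrt (1 + (delta * m + tau)\<^sup>2) / delta"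
proof -
  have "(-1/delta)\<^sup>2 + (m + tau/delta)\<^sup>2 = (1 + (delta * m + tau)\<^sup>2) / delta\<^sup>2"
    using assms by (simp add: field_simps power2_eq_square)
  then show ?thesis
    using assms by (simp add: matrix_inv_A_L_mult_slope_vector norm_vector_2 real_sqrt_divide)
qed

lemma eigenvalue_A_L_root:
  assumes "is_eigenvalue (A_L tau delta) l"
  shows "l\<^sup>2 - tau * l + delta = 0"
proof -
  obtain v where v: "v \<noteq> 0" "A_L tau delta *v v = l *\<^sub>R v"
    using assms is_eigenvalue_def by auto
  have row1: "tau * v$1 + v$2 = l * v$1" and row2: "- delta * v$1 = l * v$2"
    using v(2) by (auto simp: A_L_def matrix_vector_mult_def vec_eq_iff forall_2 sum_2)
  have "v$1 \<noteq> 0"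
    using v(1) row1 by (auto simp: vec_eq_iff forall_2)
  moreover have "v$2 = (l - tau) * v$1" using row1 by (simp add: algebra_simps)
  with row2 have "(l\<^sup>2 - tau * l + delta) * v$1 = 0"
    by (simp add: algebra_simps power2_eq_square)
  ultimately show ?thesis by simp
qed

lemma eigenvalues_A_L_Vieta:
  assumes "is_eigenvalue (A_L tau delta) l1" and "is_eigenvalue (A_L tau delta) l2"
    and "l1 \<noteq> l2"
  shows "tau = l1 + l2" and "delta = l1 * l2"
proof -
  have r1: "l1\<^sup>2 - tau * l1 + delta = 0" and r2: "l2\<^sup>2 - tau * l2 + delta = 0"
    using assms(1,2) by (simp_all add: eigenvalue_A_L_root)
  have "(l1 - l2) * (l1 + l2 - tau) = 0"
    using r1 r2 by (simp add: algebra_simps power2_eq_square)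
  with assms(3) show tau: "tau = l1 + l2" by simp
  with r1 show "delta = l1 * l2" by (simp add: algebra_simps power2_eq_square)
qed

lemma cone_hat_invariantI:
  assumes "\<And>m. m \<in> K \<Longrightarrow> \<exists>r. \<exists>m'\<in>K. A *v vector [m, 1] = r *\<^sub>R vector [m', 1]"
  shows "cone_invariant A (cone_hat K)"
  unfolding cone_invariant_def cone_hat_def
proof safe
  fix m t assume "m \<in> K"
  then obtain r m' where "m' \<in> K" "A *v vector [m, 1] = r *\<^sub>R vector [m', 1]"
    using assms by blast
  then have "A *v (t *\<^sub>R vector [m, 1]) = (t * r) *\<^sub>R vector [m', 1] \<and> m' \<in> K"
    by (simp add: matrix_vector_mult_scaleR)
  then show "\<exists>m' s. A *v (t *\<^sub>R vector [m, 1]) = s *\<^sub>R vector [m', 1] \<and> m' \<in> K"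
    by blast
qed

lemma cone_hat_expandingI:
  assumes "c > 1" and "\<And>m. m \<in> K \<Longrightarrow> c * norm (vector [m, 1] :: real^2) \<le> norm (A *v vector [m, 1])"
  shows "cone_expanding A (cone_hat K) c"
  unfolding cone_expanding_def cone_hat_def
proof safe
  fix m t assume "m \<in> K"
  then have "\<bar>t\<bar> * (c * norm (vector [m, 1] :: real^2)) \<le> \<bar>t\<bar> * norm (A *v vector [m, 1])"
    using assms(2) by (intro mult_left_mono) auto
  then show "c * norm (t *\<^sub>R vector [m, 1] :: real^2) \<le> norm (A *v (t *\<^sub>R vector [m, 1]))"
    by (simp add: matrix_vector_mult_scaleR algebra_simps)
qed (use assms(1) in simp)

lemma slope_denominator_ge:
  fixes s u m :: real
  assumes "0 < s" "0 < u" "-1/u \<le> m"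
  shows "u \<le> s * u * m + s + u"
proof -
  have "-1 \<le> u * m" using assms(2,3) by (simp add: field_simps)
  then have "s * (-1) \<le> s * (u * m)" using assms(1) by (intro mult_left_mono) auto
  then show ?thesis by (simp add: algebra_simps)
qed

lemma expansion_quadratic_bound:
  fixes s u m :: real
  assumes "0 < s" "s < 1" "1 < u" "-1/u \<le> m" "m \<le> 1"
  shows "u\<^sup>2 * min 1 ((1 + s)\<^sup>2 / 2) * (m\<^sup>2 + 1) \<le> 1 + (s * u * m + s + u)\<^sup>2"
proof (cases "m \<le> 0")
  case True
  have "-1 \<le> u * m" using assms(3,4) by (simp add: field_simps)
  with True assms(3) have "(u * m)\<^sup>2 \<le> 1"
    by (simp add: abs_square_le_1 abs_le_iff mult_nonneg_nonpos)
  moreover have "u\<^sup>2 \<le> (s * u * m + s + u)\<^sup>2"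
    using slope_denominator_ge[of s u m] assms by (intro power_mono) auto
  moreover have "u\<^sup>2 * min 1 ((1 + s)\<^sup>2 / 2) * (m\<^sup>2 + 1) \<le> u\<^sup>2 * (m\<^sup>2 + 1)"
    by (intro mult_right_mono mult_left_le) auto
  ultimately show ?thesis by (simp add: algebra_simps power_mult_distrib)
next
  case False
  define k where "k = min 1 ((1 + s)\<^sup>2 / 2)"
  define g where "g x = (1 + s * x)\<^sup>2 - k * (x\<^sup>2 + 1)" for x
  have "s * s < s" using assms(1,2) by (metis mult.right_neutral mult_strict_left_mono)
  then have "s * s < 1 + 2 * s" using assms(1) by linarith
  then have "s\<^sup>2 < (1 + s)\<^sup>2 / 2" by (simp add: power2_eq_square algebra_simps)
  moreover have "s\<^sup>2 < 1" using assms(1,2) by (simp add: power_less_one_iff)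
  ultimately have concave: "s\<^sup>2 - k < 0" unfolding k_def by linarith
  have "g 0 \<ge> 0" "g 1 \<ge> 0" unfolding g_def k_def by auto
  \<comment> \<open>\<open>g\<close> lies above its chord over \<open>[0, 1]\<close>:\<close>
  have "g m = (1 - m) * g 0 + m * g 1 + (s\<^sup>2 - k) * (m * (m - 1))"
    unfolding g_def by (simp add: algebra_simps power2_eq_square)
  moreover have "0 \<le> (s\<^sup>2 - k) * (m * (m - 1))"
    using concave False assms(5) by (intro mult_nonpos_nonpos) (auto intro: mult_nonneg_nonpos)
  ultimately have "g m \<ge> 0"
    using \<open>g 0 \<ge> 0\<close> \<open>g 1 \<ge> 0\<close> False assms(5) by (smt (verit) mult_nonneg_nonneg)
  then have "u\<^sup>2 * k * (m\<^sup>2 + 1) \<le> u\<^sup>2 * (1 + s * m)\<^sup>2"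
    unfolding g_def by (simp add: mult.assoc mult_left_mono)
  also have "\<dots> = (u * (1 + s * m))\<^sup>2" by (simp add: power_mult_distrib)
  also have "\<dots> \<le> (s * u * m + s + u)\<^sup>2"
    using False assms by (intro power_mono) (auto simp: algebra_simps)
  finally show ?thesis unfolding k_def by simp
qed

lemma expansion_factor_gt_1:
  fixes s :: real
  assumes "0 < s" "s < 1"
  shows "1 < min (1/s) ((1 + s) / (sqrt 2 * s))"
proof -
  have "sqrt 2 * s < 2 * s"
    using assms(1) by (intro mult_strict_right_mono) (auto intro: real_less_lsqrt)
  then have "sqrt 2 * s < 1 + s" using assms(2) by linarith
  then show ?thesis using assms by simp
qed

lemma expansion_factor_scaled_square:
  fixes s u :: real
  assumes "0 < s" "0 < u"
  shows "(min (1/s) ((1 + s) / (sqrt 2 * s)) * (s * u))\<^sup>2 = u\<^sup>2 * min 1 ((1 + s)\<^sup>2 / 2)"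
proof -
  have "(1 + s) / (sqrt 2 * s) * (s * u) = u * ((1 + s) / sqrt 2)"
    using assms(1) by (simp add: field_simps)
  then have "min (1/s) ((1 + s) / (sqrt 2 * s)) * (s * u) = u * min 1 ((1 + s) / sqrt 2)"
    using assms by (simp add: min_mult_distrib_right min_mult_distrib_left ac_simps)
  then have "(min (1/s) ((1 + s) / (sqrt 2 * s)) * (s * u))\<^sup>2 = u\<^sup>2 * (min 1 ((1 + s) / sqrt 2))\<^sup>2"
    by (metis power_mult_distrib)
  moreover have "(min 1 x)\<^sup>2 = min 1 (x\<^sup>2)" if "0 \<le> x" for x :: real
    using that power_le_one[of x 2] one_le_power[of x 2] by (auto simp: min_def)
  then have "(min 1 ((1 + s) / sqrt 2))\<^sup>2 = min 1 ((1 + s)\<^sup>2 / 2)"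
    using assms(1) by (simp add: power_divide)
  ultimately show ?thesis by simp
qed

lemma cone_invariant_matrix_inv_A_L:
  fixes s u mmax :: real
  assumes "0 < s" "0 < u" "0 \<le> mmax"
  shows "cone_invariant (matrix_inv (A_L (s + u) (s * u))) (cone_hat {-1/u..mmax})"
proof (rule cone_hat_invariantI)
  fix m assume "m \<in> {-1/u..mmax}"
  then have d: "u \<le> s * u * m + (s + u)"
    using slope_denominator_ge[of s u m] assms by (simp add: add.assoc)
  then have "-1 / (s * u * m + (s + u)) \<in> {-1/u..0}"
    using assms(2) by (auto simp: frac_le)
  then have "-1 / (s * u * m + (s + u)) \<in> {-1/u..mmax}"
    using assms(3) by (meson atLeastAtMost_iff order.trans)
  with d show "\<exists>r. \<exists>m'\<in>{-1/u..mmax}.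
      matrix_inv (A_L (s + u) (s * u)) *v vector [m, 1] = r *\<^sub>R vector [m', 1]"
    using matrix_inv_A_L_slope_map[of "s * u" m "s + u"] assms(1,2) by fastforce
qed

lemma cone_expanding_matrix_inv_A_L:
  fixes s u mmax :: real
  assumes "0 < s" "s < 1" "1 < u" "mmax \<le> 1"
  shows "cone_expanding (matrix_inv (A_L (s + u) (s * u))) (cone_hat {-1/u..mmax})
           (min (1/s) ((1 + s) / (sqrt 2 * s)))"
proof (rule cone_hat_expandingI)
  define c where "c = min (1/s) ((1 + s) / (sqrt 2 * s))"
  show "c > 1" unfolding c_def using assms(1,2) by (rule expansion_factor_gt_1)
  have su: "0 < s * u" using assms(1,3) by simp
  fix m assume "m \<in> {-1/u..mmax}"
  then have "(c * (s * u))\<^sup>2 * (m\<^sup>2 + 1) \<le> 1 + (s * u * m + (s + u))\<^sup>2"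
    using expansion_quadratic_bound[of s u m] expansion_factor_scaled_square[of s u] assms
    unfolding c_def by (simp add: add.assoc)
  then have "sqrt ((c * (s * u))\<^sup>2 * (m\<^sup>2 + 1)) \<le> sqrt (1 + (s * u * m + (s + u))\<^sup>2)"
    by (rule real_sqrt_le_mono)
  then have "c * (s * u) * sqrt (m\<^sup>2 + 1) \<le> sqrt (1 + (s * u * m + (s + u))\<^sup>2)"
    using \<open>c > 1\<close> su by (simp add: real_sqrt_mult)
  then show "c * norm (vector [m, 1] :: real^2)
      \<le> norm (matrix_inv (A_L (s + u) (s * u)) *v vector [m, 1])"
    using su by (simp add: norm_vector_2 norm_matrix_inv_A_L_mult_slope_vector field_simps)
qed

theorem lemma6p1:
  fixes tau delta ls lu mmax :: real
  assumes "tau > delta + 1" and "delta > 0"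
    and "is_eigenvalue (A_L tau delta) ls" and "is_eigenvalue (A_L tau delta) lu"
    and "0 < ls" and "ls < 1" and "1 < lu"
    and "mmax \<in> {0..1}"
  shows "cone_invariant (matrix_inv (A_L tau delta)) (cone_hat {-1/lu..mmax})
       \<and> cone_expanding (matrix_inv (A_L tau delta)) (cone_hat {-1/lu..mmax})
           (min (1/ls) ((1 + ls) / (sqrt 2 * ls)))"
proof -
  have "tau = ls + lu" and "delta = ls * lu"
    using eigenvalues_A_L_Vieta[OF assms(3,4)] assms(6,7) by auto
  then show ?thesis
    using cone_invariant_matrix_inv_A_L[of ls lu mmax] cone_expanding_matrix_inv_A_L[of ls lu mmax]
      assms(5-8) by simp
qed

end
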